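(* Let $\mathbb{F}\in\{\mathbb{C},\mathbb{H},\mathbb{O}\}$ and let $H^2_{\mathbb{R}}\subset H^2_{\mathbb{F}}$ be a totally real totally geodesic plane. For any three points $w,z_1,z_2\in H^2_{\mathbb{R}}$ (with $z_i\ne w$), the half-spaces $\mathfrak{S}^+(z_1,w)$ and $\mathfrak{S}^+(z_2,w)$ are disjoint if and only if $\mathfrak{S}^+(z_1,w)\cap H^2_{\mathbb{R}}$ and $\mathfrak{S}^+(z_2,w)\cap H^2_{\mathbb{R}}$ are disjoint.
   Context: $H^2_{\mathbb{F}}$ is the $\mathbb{F}$-hyperbolic plane with distance $d$. For $z\neq w$, the equidistant half-space is $\mathfrak{S}^+(z,w)=\{y\in H^2_{\mathbb{F}}: d(y,z)<d(y,w)\}$. *)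

theory Defs
  imports Complex_Main
begin

section \<open>Quaternions and octonions via the Cayley--Dickson construction\<close>

type_synonym quat = "complex \<times> complex"
type_synonym oct = "quat \<times> quat"

definition qmult :: "quat \<Rightarrow> quat \<Rightarrow> quat" where
  "qmult x y = (case x of (a, b) \<Rightarrow> case y of (c, d) \<Rightarrow>
      (a * c - cnj d * b, d * a + b * cnj c))"
definition qconj :: "quat \<Rightarrow> quat" where
  "qconj x = (case x of (a, b) \<Rightarrow> (cnj a, - b))"
definition qadd :: "quat \<Rightarrow> quat \<Rightarrow> quat" where
  "qadd x y = (fst x + fst y, snd x + snd y)"
definition qneg :: "quat \<Rightarrow> quat" where
  "qneg x = (- fst x, - snd x)"

definition omult :: "oct \<Rightarrow> oct \<Rightarrow> oct" where
  "omult x y = (case x of (a, b) \<Rightarrow> case y of (c, d) \<Rightarrow>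
      (qadd (qmult a c) (qneg (qmult (qconj d) b)), qadd (qmult d a) (qmult b (qconj c))))"
definition oconj :: "oct \<Rightarrow> oct" where
  "oconj x = (case x of (a, b) \<Rightarrow> (qconj a, qneg b))"

definition ore :: "oct \<Rightarrow> real" where
  "ore x = Re (fst (fst x))"
definition onorm2 :: "oct \<Rightarrow> real" where
  "onorm2 x = (cmod (fst (fst x)))\<^sup>2 + (cmod (snd (fst x)))\<^sup>2
             + (cmod (fst (snd x)))\<^sup>2 + (cmod (snd (snd x)))\<^sup>2"
definition oreal :: "real \<Rightarrow> oct" where
  "oreal r = ((complex_of_real r, 0), (0, 0))"

datatype divalg = FC | FH | FO

definition inF :: "divalg \<Rightarrow> oct \<Rightarrow> bool" where
  "inF F x = (case F of
      FC \<Rightarrow> snd (fst x) = 0 \<and> snd x = (0, 0)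
    | FH \<Rightarrow> snd x = (0, 0)
    | FO \<Rightarrow> True)"

type_synonym pt = "oct \<times> oct"

definition pnorm2 :: "pt \<Rightarrow> real" where
  "pnorm2 z = onorm2 (fst z) + onorm2 (snd z)"

definition HF :: "divalg \<Rightarrow> pt set" where
  "HF F = {z. inF F (fst z) \<and> inF F (snd z) \<and> pnorm2 z < 1}"

text \<open>Homogeneous coordinates v = (z1, z2, 1) with the form of signature (2,1).
  The kernel K is the Lorentzian trace form of the Albert (Jordan) algebra model,
  K(v,w) = sum_{i,j} eps_i eps_j Re((v_i conj v_j)(w_j conj w_i)); in the associative
  cases F = C, H it equals |<v,w>|^2 for the Hermitian form <v,w>.\<close>
definition hcoord :: "pt \<Rightarrow> nat \<Rightarrow> oct" where
  "hcoord z i = (if i = 0 then fst z else if i = 1 then snd z else oreal 1)"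
definition heps :: "nat \<Rightarrow> real" where
  "heps i = (if i = 2 then -1 else 1)"
definition hkernel :: "pt \<Rightarrow> pt \<Rightarrow> real" where
  "hkernel z w = (\<Sum>i<3. \<Sum>j<3. heps i * heps j *
      ore (omult (omult (hcoord z i) (oconj (hcoord z j)))
                 (omult (hcoord w j) (oconj (hcoord w i)))))"

definition hdist :: "pt \<Rightarrow> pt \<Rightarrow> real" where
  "hdist z w = 2 * arcosh (sqrt (hkernel z w / ((1 - pnorm2 z) * (1 - pnorm2 w))))"

definition HR_std :: "divalg \<Rightarrow> pt set" where
  "HR_std F = {z \<in> HF F. \<exists>r s. z = (oreal r, oreal s)}"

definition isometry_HF :: "divalg \<Rightarrow> (pt \<Rightarrow> pt) \<Rightarrow> bool" where
  "isometry_HF F g = (bij_betw g (HF F) (HF F) \<and>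
      (\<forall>x\<in>HF F. \<forall>y\<in>HF F. hdist (g x) (g y) = hdist x y))"

definition totally_real_plane :: "divalg \<Rightarrow> pt set \<Rightarrow> bool" where
  "totally_real_plane F P = (\<exists>g. isometry_HF F g \<and> P = g ` HR_std F)"

definition halfspace :: "divalg \<Rightarrow> pt \<Rightarrow> pt \<Rightarrow> pt set" where
  "halfspace F z w = {y \<in> HF F. hdist y z < hdist y w}"

end

theory Submission
  imports Defs "HOL-Analysis.Euclidean_Space"
begin

(* Transport everything by the isometry to the standard real plane, whose points are (r,s) with
   r^2 + s^2 < 1. For y = (y1,y2) and a real point the kernel is
   K(y,(r,s)) = |r y1 + s y2 - 1|^2, the octonions y1, y2 being vectors of R^8, and d(y,z) < d(y,w)
   compares K(y,z) / (1 - |z|^2) with the same quantity for w. For w = (r0,s0) let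
   T = r0 y1 + s0 y2 - 1 and p = (<T,y1>, <T,y2>) / <T,1>. Then
   K(p,(r,s)) = <T, r y1 + s y2 - 1>^2 / <T,1>^2, so by Cauchy-Schwarz every real point that is
   closer to y than w is also closer to p than w. The real work is to show that p lies in the
   disc, an inequality about two vectors of norm-square sum below 1 in an inner product space.
   Hence a point of both half-spaces produces a real point of both. *)

lemma aczel_inequality:
  fixes a x :: "'a::real_inner"
  assumes "norm a \<le> 1" and "norm x \<le> 1"
  shows "(1 - (norm a)\<^sup>2) * (1 - (norm x)\<^sup>2) \<le> (1 - inner a x)\<^sup>2"
proof -
  define u v where "u = 1 - (norm a)\<^sup>2" and "v = 1 - (norm x)\<^sup>2"
  have "0 \<le> u" "0 \<le> v"
    using assms by (simp_all add: u_def v_def abs_square_le_1)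
  have "2 * inner a x \<le> (norm a)\<^sup>2 + (norm x)\<^sup>2"
    using power2_norm_eq_inner[of "a - x"] zero_le_power2[of "norm (a - x)"]
    by (simp add: power2_norm_eq_inner inner_diff_left inner_diff_right inner_commute)
  then have "u + v \<le> 2 * (1 - inner a x)"
    by (simp add: u_def v_def)
  have "u * v \<le> ((u + v) / 2)\<^sup>2"
    using zero_le_power2[of "u - v"] by (simp add: power2_eq_square field_simps)
  also have "\<dots> \<le> (1 - inner a x)\<^sup>2"
    using \<open>0 \<le> u\<close> \<open>0 \<le> v\<close> \<open>u + v \<le> 2 * (1 - inner a x)\<close> by (intro power_mono) auto
  finally show ?thesis
    by (simp add: u_def v_def)
qed

lemma disc_cross_ineq:
  fixes a x z :: "real \<times> real"
  assumes a: "norm a \<le> 1" and x: "norm x \<le> 1" and z: "norm z \<le> 1"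
  shows "(1 - (norm a)\<^sup>2) * (norm (x + z))\<^sup>2 \<le> 4 * (1 - inner a x) * (1 + inner a z)"
proof -
  define n ax az where "n = 1 - (norm a)\<^sup>2" and "ax = 1 - inner a x" and "az = 1 + inner a z"
  define XX ZZ XZ where "XX = 1 - (norm x)\<^sup>2" and "ZZ = 1 - (norm z)\<^sup>2" and "XZ = 1 + inner x z"
  obtain a1 a2 x1 x2 z1 z2 where coords: "a = (a1, a2)" "x = (x1, x2)" "z = (z1, z2)"
    by (cases a, cases x, cases z)
  define D where "D = (a1 - x1) * z2 - (a2 - x2) * z1 + a1 * x2 - a2 * x1"
  \<comment> \<open>\<open>n\<^sup>2\<close> times the Cauchy--Schwarz defect of the components of \<open>(x,1)\<close> and \<open>(-z,1)\<close>
    Lorentz-orthogonal to \<open>(a,1)\<close>; in the plane this defect is a perfect square\<close>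
  have gram: "(ax\<^sup>2 - n * XX) * (az\<^sup>2 - n * ZZ) - (n * XZ - ax * az)\<^sup>2 = n * D\<^sup>2"
    unfolding n_def ax_def az_def XX_def ZZ_def XZ_def D_def power2_norm_eq_inner coords
    by (simp add: power2_eq_square algebra_simps)
  have "0 \<le> n" "0 \<le> XX" "0 \<le> ZZ"
    using a x z by (simp_all add: n_def XX_def ZZ_def abs_square_le_1)
  have "n * XX \<le> ax\<^sup>2"
    using aczel_inequality[OF a x] by (simp add: n_def XX_def ax_def)
  moreover have "n * ZZ \<le> az\<^sup>2"
    using aczel_inequality[of a "- z"] a z by (simp add: n_def ZZ_def az_def)
  ultimately have "(n * XZ - ax * az)\<^sup>2 \<le> (ax * az)\<^sup>2"
  proof -
    have "(n * XZ - ax * az)\<^sup>2 \<le> (ax\<^sup>2 - n * XX) * (az\<^sup>2 - n * ZZ)"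
      using gram mult_nonneg_nonneg[OF \<open>0 \<le> n\<close> zero_le_power2[of D]] by linarith
    also have "\<dots> \<le> ax\<^sup>2 * az\<^sup>2"
      using \<open>n * XX \<le> ax\<^sup>2\<close> \<open>n * ZZ \<le> az\<^sup>2\<close> \<open>0 \<le> n\<close> \<open>0 \<le> XX\<close> \<open>0 \<le> ZZ\<close>
      by (intro mult_mono) auto
    finally show ?thesis
      by (simp add: power_mult_distrib)
  qed
  moreover have "0 \<le> ax" "0 \<le> az"
    using Cauchy_Schwarz_ineq2[of a x] Cauchy_Schwarz_ineq2[of a z] a x z
      mult_le_one[of "norm a" "norm x"] mult_le_one[of "norm a" "norm z"]
    by (auto simp: ax_def az_def abs_le_iff)
  ultimately have "n * XZ \<le> 2 * (ax * az)"
    using abs_le_square_iff[of "n * XZ - ax * az" "ax * az"] by (simp add: abs_le_iff)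
  moreover have "(norm (x + z))\<^sup>2 \<le> 2 * XZ"
  proof -
    have "(norm (x + z))\<^sup>2 = (norm x)\<^sup>2 + (norm z)\<^sup>2 + 2 * inner x z"
      by (simp add: power2_norm_eq_inner inner_add_left inner_add_right inner_commute)
    then show ?thesis
      using x z power_le_one[of "norm x" 2] power_le_one[of "norm z" 2] by (simp add: XZ_def)
  qed
  ultimately have "n * (norm (x + z))\<^sup>2 \<le> 4 * ax * az"
    using mult_left_mono[OF _ \<open>0 \<le> n\<close>, of "(norm (x + z))\<^sup>2" "2 * XZ"] by linarith
  then show ?thesis
    by (simp add: n_def ax_def az_def)
qed

lemma four_inner_comb_le:
  fixes y1 y2 :: "'a::real_inner" and x q :: "real \<times> real"
  shows "4 * inner (fst x *\<^sub>R y1 + snd x *\<^sub>R y2) (fst q *\<^sub>R y1 + snd q *\<^sub>R y2)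
    \<le> (norm (x + q))\<^sup>2 * ((norm y1)\<^sup>2 + (norm y2)\<^sup>2)"
proof -
  define P Q where "P = fst x *\<^sub>R y1 + snd x *\<^sub>R y2" and "Q = fst q *\<^sub>R y1 + snd q *\<^sub>R y2"
  have "4 * inner P Q \<le> (norm (P + Q))\<^sup>2"
    using zero_le_power2[of "norm (P - Q)"]
    by (simp add: power2_norm_eq_inner inner_add_left inner_add_right inner_diff_left
        inner_diff_right inner_commute)
  also have "\<dots> \<le> (norm (x + q))\<^sup>2 * ((norm y1)\<^sup>2 + (norm y2)\<^sup>2)"
  proof -
    have "P + Q = fst (x + q) *\<^sub>R y1 + snd (x + q) *\<^sub>R y2"
      by (simp add: P_def Q_def algebra_simps)
    then have "norm (P + Q) \<le> \<bar>fst (x + q)\<bar> * norm y1 + \<bar>snd (x + q)\<bar> * norm y2"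
      using norm_triangle_ineq[of "fst (x + q) *\<^sub>R y1" "snd (x + q) *\<^sub>R y2"] by simp
    also have "\<dots> \<le> norm (x + q) * sqrt ((norm y1)\<^sup>2 + (norm y2)\<^sup>2)"
      using Cauchy_Schwarz_ineq2[of "(\<bar>fst (x + q)\<bar>, \<bar>snd (x + q)\<bar>)" "(norm y1, norm y2)"]
      by (simp add: norm_Pair norm_prod_def)
    finally have "(norm (P + Q))\<^sup>2 \<le> (norm (x + q) * sqrt ((norm y1)\<^sup>2 + (norm y2)\<^sup>2))\<^sup>2"
      by (intro power_mono) auto
    then show ?thesis
      by (simp add: power_mult_distrib)
  qed
  finally show ?thesis
    by (simp add: P_def Q_def)
qed

lemma inner_comb_less_of_perp:
  fixes y1 y2 :: "'a::real_inner" and a x q :: "real \<times> real"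
  assumes y: "(norm y1)\<^sup>2 + (norm y2)\<^sup>2 < 1 - (norm a)\<^sup>2"
    and x: "norm x < 1" and q: "norm q = 1"
  shows "inner (fst x *\<^sub>R y1 + snd x *\<^sub>R y2) (fst q *\<^sub>R y1 + snd q *\<^sub>R y2)
    < (1 - inner a x) * (1 + inner a q)"
proof -
  have "(norm a)\<^sup>2 < 1"
    using y by (smt (verit) zero_le_power2)
  then have "norm a < 1"
    using abs_square_less_1[of "norm a"] by simp
  then have "0 < 1 - inner a x" "0 < 1 + inner a q"
    using Cauchy_Schwarz_ineq2[of a x] Cauchy_Schwarz_ineq2[of a q] x q
      mult_strict_mono[of "norm a" 1 "norm x" 1]
    by (auto simp: abs_less_iff abs_le_iff)
  have "(norm (x + q))\<^sup>2 * ((norm y1)\<^sup>2 + (norm y2)\<^sup>2) < 4 * (1 - inner a x) * (1 + inner a q)"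
  proof (cases "x + q = 0")
    case True
    then show ?thesis
      using \<open>0 < 1 - inner a x\<close> \<open>0 < 1 + inner a q\<close> by simp
  next
    case False
    then have "(norm (x + q))\<^sup>2 * ((norm y1)\<^sup>2 + (norm y2)\<^sup>2) < (1 - (norm a)\<^sup>2) * (norm (x + q))\<^sup>2"
      using y by (simp add: mult.commute)
    also have "\<dots> \<le> 4 * (1 - inner a x) * (1 + inner a q)"
      using disc_cross_ineq[of a x q] \<open>norm a < 1\<close> x q by simp
    finally show ?thesis .
  qed
  then have "4 * inner (fst x *\<^sub>R y1 + snd x *\<^sub>R y2) (fst q *\<^sub>R y1 + snd q *\<^sub>R y2)
      < 4 * ((1 - inner a x) * (1 + inner a q))"
    using four_inner_comb_le[of x y1 y2 q] by (simp only: mult.assoc)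
  then show ?thesis
    by simp
qed

lemma inner_comb_plus_unit_neg:
  fixes y1 y2 e :: "'a::real_inner" and x q :: "real \<times> real"
  assumes e: "norm e = 1" and y: "(norm y1)\<^sup>2 + (norm y2)\<^sup>2 < 1"
    and x: "norm x < 1" and q: "norm q = 1"
  shows "inner (fst x *\<^sub>R y1 + snd x *\<^sub>R y2 - e) (fst q *\<^sub>R y1 + snd q *\<^sub>R y2 + e) < 0"
proof -
  have ee: "inner e e = 1"
    using e by (simp flip: power2_norm_eq_inner)
  define a where "a = (inner y1 e, inner y2 e)"
  define y1' y2' where "y1' = y1 - fst a *\<^sub>R e" and "y2' = y2 - snd a *\<^sub>R e"
  define P Q where "P = fst x *\<^sub>R y1' + snd x *\<^sub>R y2'" and "Q = fst q *\<^sub>R y1' + snd q *\<^sub>R y2'"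
  have "inner y1' e = 0" "inner y2' e = 0"
    by (simp_all add: y1'_def y2'_def a_def inner_diff_left ee)
  then have "inner P e = 0" "inner e Q = 0"
    by (simp_all add: P_def Q_def inner_add_left inner_add_right inner_commute[of e])
  moreover have "fst x *\<^sub>R y1 + snd x *\<^sub>R y2 - e = P - (1 - inner a x) *\<^sub>R e"
    "fst q *\<^sub>R y1 + snd q *\<^sub>R y2 + e = Q + (1 + inner a q) *\<^sub>R e"
    by (simp_all add: P_def Q_def y1'_def y2'_def inner_prod_def algebra_simps)
  ultimately have split: "inner (fst x *\<^sub>R y1 + snd x *\<^sub>R y2 - e) (fst q *\<^sub>R y1 + snd q *\<^sub>R y2 + e)
      = inner P Q - (1 - inner a x) * (1 + inner a q)"
    by (simp add: inner_add_right ee algebra_simps)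
  have "(norm y1)\<^sup>2 = (norm y1')\<^sup>2 + (fst a)\<^sup>2" "(norm y2)\<^sup>2 = (norm y2')\<^sup>2 + (snd a)\<^sup>2"
    unfolding power2_norm_eq_inner y1'_def y2'_def
    by (simp_all add: a_def inner_diff_left inner_diff_right ee inner_commute power2_eq_square)
  moreover have "(norm a)\<^sup>2 = (fst a)\<^sup>2 + (snd a)\<^sup>2"
    unfolding power2_norm_eq_inner by (simp add: inner_prod_def power2_eq_square)
  ultimately have "(norm y1')\<^sup>2 + (norm y2')\<^sup>2 < 1 - (norm a)\<^sup>2"
    using y by simp
  then show ?thesis
    using inner_comb_less_of_perp[OF _ x q] split by (simp add: P_def Q_def)
qed

lemma norm_less_if_inner_less:
  fixes v :: "'a::euclidean_space"
  assumes "\<And>q. norm q = 1 \<Longrightarrow> inner v q < c"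
  shows "norm v < c"
proof (cases "v = 0")
  case True
  then show ?thesis
    using assms[of "SOME i. i \<in> Basis"] SOME_Basis by simp
next
  case False
  then show ?thesis
    using assms[of "v /\<^sub>R norm v"] by (simp add: field_simps power2_eq_square flip: power2_norm_eq_inner)
qed

lemma inner_comb_in_disc:
  fixes y1 y2 e :: "'a::real_inner" and x :: "real \<times> real"
  defines "T \<equiv> fst x *\<^sub>R y1 + snd x *\<^sub>R y2 - e"
  assumes "norm e = 1" and "(norm y1)\<^sup>2 + (norm y2)\<^sup>2 < 1" and "norm x < 1"
  shows "(inner T y1)\<^sup>2 + (inner T y2)\<^sup>2 < (inner T e)\<^sup>2"
proof -
  have "norm (inner T y1, inner T y2) < - inner T e"
  proof (rule norm_less_if_inner_less)
    fix q :: "real \<times> real"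
    assume "norm q = 1"
    then have "inner T (fst q *\<^sub>R y1 + snd q *\<^sub>R y2 + e) < 0"
      using inner_comb_plus_unit_neg assms by blast
    then show "inner (inner T y1, inner T y2) q < - inner T e"
      by (simp add: inner_add_right inner_prod_def mult.commute)
  qed
  then have "(norm (inner T y1, inner T y2))\<^sup>2 < (inner T e)\<^sup>2"
    using power_strict_mono[of "norm (inner T y1, inner T y2)" "- inner T e" 2] by simp
  then show ?thesis
    unfolding power2_norm_eq_inner by (simp add: power2_eq_square)
qed

lemma ore_omult_oconj: "ore (omult x (oconj y)) = inner x y"
  by (cases x; cases y) (auto simp: ore_def omult_def oconj_def qmult_def qconj_def qadd_def
      qneg_def inner_complex_def split: prod.split)

lemma omult_oreal: "omult x (oreal c) = c *\<^sub>R x"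
  by (cases x) (auto simp: oreal_def omult_def qmult_def qconj_def qadd_def qneg_def
      scaleR_conv_of_real mult.commute split: prod.split)

lemma oconj_oreal: "oconj (oreal c) = oreal c"
  by (simp add: oreal_def oconj_def qconj_def qneg_def)

lemma scaleR_oreal: "c *\<^sub>R oreal a = oreal (c * a)"
  by (simp add: oreal_def scaleR_conv_of_real)

lemma ore_scaleR: "ore (c *\<^sub>R x) = c * ore x"
  by (simp add: ore_def)

lemma norm_oreal: "norm (oreal a) = \<bar>a\<bar>"
  by (simp add: oreal_def norm_Pair)

lemma onorm2_eq_norm: "onorm2 x = (norm x)\<^sup>2"
  by (cases x) (auto simp: onorm2_def norm_Pair)

lemma pnorm2_eq_norm: "pnorm2 y = (norm (fst y))\<^sup>2 + (norm (snd y))\<^sup>2"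
  by (simp add: pnorm2_def onorm2_eq_norm)

lemma pnorm2_real_point: "pnorm2 (oreal r, oreal s) = r\<^sup>2 + s\<^sup>2"
  by (simp add: pnorm2_eq_norm norm_oreal)

lemma HR_std_iff: "z \<in> HR_std F \<longleftrightarrow> (\<exists>r s. z = (oreal r, oreal s) \<and> r\<^sup>2 + s\<^sup>2 < 1)"
proof -
  have "inF F (oreal t)" for t
    by (cases F) (simp_all add: inF_def oreal_def)
  then show ?thesis
    by (fastforce simp: HR_std_def HF_def pnorm2_real_point)
qed

definition kvec :: "pt \<Rightarrow> real \<Rightarrow> real \<Rightarrow> oct" where
  "kvec y r s = r *\<^sub>R fst y + s *\<^sub>R snd y - oreal 1"

lemma kvec_real_point: "kvec (oreal u, oreal v) r s = oreal (r * u + s * v - 1)"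
proof -
  have "oreal a + oreal b - oreal c = oreal (a + b - c)" for a b c
    by (simp add: oreal_def zero_prod_def)
  then show ?thesis
    by (simp add: kvec_def scaleR_oreal)
qed

lemma hkernel_real_point: "hkernel y (oreal r, oreal s) = (norm (kvec y r s))\<^sup>2"
proof -
  define c where "c i = (if i = 0 then r else if i = 1 then s else 1)" for i :: nat
  have "hcoord (oreal r, oreal s) i = oreal (c i)" for i
    by (simp add: hcoord_def c_def)
  then have "hkernel y (oreal r, oreal s) =
      (\<Sum>i<3. \<Sum>j<3. heps i * heps j * (c i * c j * inner (hcoord y i) (hcoord y j)))"
    by (simp add: hkernel_def omult_oreal oconj_oreal scaleR_oreal ore_scaleR ore_omult_oconj)
  also have "\<dots> = (norm (kvec y r s))\<^sup>2"
    by (simp add: numeral_3_eq_3 c_def hcoord_def heps_def kvec_def power2_norm_eq_inner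
        inner_commute algebra_simps)
  finally show ?thesis .
qed

lemma norm_real_pair: "norm (r, s) = sqrt (r\<^sup>2 + s\<^sup>2)"
  by (simp add: norm_Pair)

lemma hkernel_real_point_ge:
  assumes y: "pnorm2 y \<le> 1" and rs: "r\<^sup>2 + s\<^sup>2 \<le> 1"
  shows "(1 - pnorm2 y) * (1 - (r\<^sup>2 + s\<^sup>2)) \<le> hkernel y (oreal r, oreal s)"
proof -
  define e a where "e = oreal 1" and "a = (inner (fst y) e, inner (snd y) e)"
  have "norm e = 1"
    by (simp add: e_def norm_oreal)
  have "(inner (fst y) e)\<^sup>2 \<le> (norm (fst y))\<^sup>2" "(inner (snd y) e)\<^sup>2 \<le> (norm (snd y))\<^sup>2"
    using power_mono[OF Cauchy_Schwarz_ineq2[of "fst y" e], of 2]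
      power_mono[OF Cauchy_Schwarz_ineq2[of "snd y" e], of 2] \<open>norm e = 1\<close>
    by simp_all
  then have a: "(norm a)\<^sup>2 \<le> pnorm2 y"
    by (simp add: a_def pnorm2_eq_norm norm_real_pair)
  have "inner (kvec y r s) e = inner a (r, s) - 1"
    using \<open>norm e = 1\<close>
    by (simp add: kvec_def a_def inner_add_left inner_diff_left mult.commute
        flip: e_def power2_norm_eq_inner)
  have "(1 - (norm a)\<^sup>2) * (1 - (norm (r, s))\<^sup>2) \<le> (1 - inner a (r, s))\<^sup>2"
    using a y rs abs_square_le_1[of "norm a"] by (intro aczel_inequality) (auto simp: norm_real_pair)
  also have "\<dots> = (inner (kvec y r s) e)\<^sup>2"
    using \<open>inner (kvec y r s) e = inner a (r, s) - 1\<close> by (simp add: power2_commute)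
  also have "\<dots> \<le> hkernel y (oreal r, oreal s)"
    using power_mono[OF Cauchy_Schwarz_ineq2[of "kvec y r s" e], of 2] \<open>norm e = 1\<close>
    by (simp add: hkernel_real_point)
  finally have "(1 - (norm a)\<^sup>2) * (1 - (r\<^sup>2 + s\<^sup>2)) \<le> hkernel y (oreal r, oreal s)"
    using rs by (simp add: norm_real_pair)
  moreover have "(1 - pnorm2 y) * (1 - (r\<^sup>2 + s\<^sup>2)) \<le> (1 - (norm a)\<^sup>2) * (1 - (r\<^sup>2 + s\<^sup>2))"
    using a rs by (intro mult_right_mono) auto
  ultimately show ?thesis
    by linarith
qed

lemma hdist_less_iff:
  assumes "pnorm2 y < 1" and "pnorm2 z < 1" and "pnorm2 w < 1"
    and "(1 - pnorm2 y) * (1 - pnorm2 z) \<le> hkernel y z"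
    and "(1 - pnorm2 y) * (1 - pnorm2 w) \<le> hkernel y w"
  shows "hdist y z < hdist y w \<longleftrightarrow>
    hkernel y z / (1 - pnorm2 z) < hkernel y w / (1 - pnorm2 w)"
proof -
  define c q where "c = 1 - pnorm2 y" and "q v = hkernel y v / (1 - pnorm2 v)" for v
  have "0 < c"
    using assms(1) by (simp add: c_def)
  have hdist: "hdist y v = 2 * arcosh (sqrt (q v / c))" for v
    by (simp add: hdist_def q_def c_def mult.commute)
  have "1 \<le> q v / c" if "pnorm2 v < 1" "(1 - pnorm2 y) * (1 - pnorm2 v) \<le> hkernel y v" for v
    using that \<open>0 < c\<close> by (simp add: q_def c_def le_divide_eq mult.commute)
  then have "hdist y z < hdist y w \<longleftrightarrow> q z / c < q w / c"
    using assms by (simp add: hdist)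
  also have "\<dots> \<longleftrightarrow> q z < q w"
    using \<open>0 < c\<close> by (simp only: divide_less_cancel) auto
  finally show ?thesis
    unfolding q_def .
qed

lemma hdist_less_iff_real:
  assumes "pnorm2 y < 1" and "z \<in> HR_std F" and "w \<in> HR_std F"
  shows "hdist y z < hdist y w \<longleftrightarrow>
    hkernel y z / (1 - pnorm2 z) < hkernel y w / (1 - pnorm2 w)"
  using assms by (intro hdist_less_iff)
    (auto simp: HR_std_iff pnorm2_real_point intro!: hkernel_real_point_ge)

definition proj_point :: "oct \<Rightarrow> pt \<Rightarrow> pt" where
  "proj_point T y = (oreal (inner T (fst y) / inner T (oreal 1)), oreal (inner T (snd y) / inner T (oreal 1)))"

lemma hkernel_proj_point:
  assumes "inner T (oreal 1) \<noteq> 0"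
  shows "hkernel (proj_point T y) (oreal r, oreal s) = (inner T (kvec y r s) / inner T (oreal 1))\<^sup>2"
proof -
  have "inner T (kvec y r s) / inner T (oreal 1) =
      r * (inner T (fst y) / inner T (oreal 1)) + s * (inner T (snd y) / inner T (oreal 1)) - 1"
    using assms by (simp add: kvec_def inner_diff_right inner_add_right field_simps)
  then show ?thesis
    by (simp add: proj_point_def hkernel_real_point kvec_real_point norm_oreal)
qed

lemma hkernel_proj_point_less:
  fixes y :: pt and r s r0 s0 :: real
  defines "T \<equiv> kvec y r0 s0"
  assumes nonzero: "inner T (oreal 1) \<noteq> 0" and "r\<^sup>2 + s\<^sup>2 < 1" and "r0\<^sup>2 + s0\<^sup>2 < 1"
    and closer: "hkernel y (oreal r, oreal s) / (1 - (r\<^sup>2 + s\<^sup>2))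
      < hkernel y (oreal r0, oreal s0) / (1 - (r0\<^sup>2 + s0\<^sup>2))"
  shows "hkernel (proj_point T y) (oreal r, oreal s) / (1 - (r\<^sup>2 + s\<^sup>2))
    < hkernel (proj_point T y) (oreal r0, oreal s0) / (1 - (r0\<^sup>2 + s0\<^sup>2))"
proof -
  define \<gamma> dz dw where "\<gamma> = inner T (oreal 1)" and "dz = 1 - (r\<^sup>2 + s\<^sup>2)" and "dw = 1 - (r0\<^sup>2 + s0\<^sup>2)"
  have "0 < dz" "0 < (norm T)\<^sup>2"
    using assms by (auto simp: dz_def)
  have "(inner T (kvec y r s))\<^sup>2 \<le> (norm T)\<^sup>2 * hkernel y (oreal r, oreal s)"
    using power_mono[OF Cauchy_Schwarz_ineq2[of T "kvec y r s"], of 2]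
    by (simp add: hkernel_real_point power_mult_distrib)
  then have "(inner T (kvec y r s))\<^sup>2 / dz \<le> (norm T)\<^sup>2 * (hkernel y (oreal r, oreal s) / dz)"
    using \<open>0 < dz\<close> by (simp add: divide_right_mono)
  also have "\<dots> < (norm T)\<^sup>2 * ((norm T)\<^sup>2 / dw)"
    using mult_strict_left_mono[OF closer \<open>0 < (norm T)\<^sup>2\<close>]
    by (simp only: dz_def dw_def T_def hkernel_real_point)
  finally have "(inner T (kvec y r s))\<^sup>2 / dz < (norm T)\<^sup>2 * ((norm T)\<^sup>2 / dw)" .
  moreover have "0 < \<gamma>\<^sup>2"
    using nonzero by (simp add: \<gamma>_def)
  ultimately have "(inner T (kvec y r s))\<^sup>2 / dz / \<gamma>\<^sup>2 < (norm T)\<^sup>2 * ((norm T)\<^sup>2 / dw) / \<gamma>\<^sup>2"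
    by (rule divide_strict_right_mono)
  moreover have "inner T (kvec y r0 s0) = (norm T)\<^sup>2"
    by (simp add: T_def power2_norm_eq_inner)
  ultimately show ?thesis
    using nonzero
    by (simp add: hkernel_proj_point power_divide power2_eq_square mult.commute dz_def dw_def
        flip: \<gamma>_def)
qed

lemma ex_real_point_preserving_closer:
  assumes y: "pnorm2 y < 1" and w: "w \<in> HR_std F"
  obtains p where "p \<in> HR_std F"
    and "\<And>z. z \<in> HR_std F \<Longrightarrow> hdist y z < hdist y w \<Longrightarrow> hdist p z < hdist p w"
proof -
  obtain r0 s0 where w_eq: "w = (oreal r0, oreal s0)" and "r0\<^sup>2 + s0\<^sup>2 < 1"
    using w by (auto simp: HR_std_iff)
  define T \<gamma> where "T = kvec y r0 s0" and "\<gamma> = inner T (oreal 1)"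
  have disc: "(inner T (fst y))\<^sup>2 + (inner T (snd y))\<^sup>2 < \<gamma>\<^sup>2"
    using inner_comb_in_disc[of "oreal 1" "fst y" "snd y" "(r0, s0)"] y \<open>r0\<^sup>2 + s0\<^sup>2 < 1\<close>
    by (simp add: T_def \<gamma>_def kvec_def norm_oreal pnorm2_eq_norm norm_real_pair)
  then have "\<gamma> \<noteq> 0"
    by (metis add_nonneg_nonneg not_less power_zero_numeral zero_le_power2)
  have "(inner T (fst y) / \<gamma>)\<^sup>2 + (inner T (snd y) / \<gamma>)\<^sup>2 < 1"
    using disc \<open>\<gamma> \<noteq> 0\<close> by (simp add: power_divide add_divide_distrib [symmetric])
  then have "proj_point T y \<in> HR_std F" and "pnorm2 (proj_point T y) < 1"
    by (auto simp: HR_std_iff proj_point_def pnorm2_real_point \<gamma>_def)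
  moreover have "hdist (proj_point T y) z < hdist (proj_point T y) w"
    if z: "z \<in> HR_std F" and "hdist y z < hdist y w" for z
  proof -
    obtain r s where z_eq: "z = (oreal r, oreal s)" and "r\<^sup>2 + s\<^sup>2 < 1"
      using z by (auto simp: HR_std_iff)
    show ?thesis
      using \<open>hdist y z < hdist y w\<close> hkernel_proj_point_less[of y r0 s0 r s] \<open>\<gamma> \<noteq> 0\<close>
        \<open>r\<^sup>2 + s\<^sup>2 < 1\<close> \<open>r0\<^sup>2 + s0\<^sup>2 < 1\<close>
        hdist_less_iff_real[OF y z w] hdist_less_iff_real[OF \<open>pnorm2 (proj_point T y) < 1\<close> z w]
      by (simp add: z_eq w_eq T_def \<gamma>_def pnorm2_real_point)
  qed
  ultimately show ?thesis
    using that by blast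
qed

lemma halfspaces_disjoint_iff_on_HR_std:
  assumes "w \<in> HR_std F" and "z1 \<in> HR_std F" and "z2 \<in> HR_std F"
  shows "halfspace F z1 w \<inter> halfspace F z2 w = {} \<longleftrightarrow>
    halfspace F z1 w \<inter> halfspace F z2 w \<inter> HR_std F = {}"
proof
  assume disjoint: "halfspace F z1 w \<inter> halfspace F z2 w \<inter> HR_std F = {}"
  show "halfspace F z1 w \<inter> halfspace F z2 w = {}"
  proof (rule ccontr)
    assume "halfspace F z1 w \<inter> halfspace F z2 w \<noteq> {}"
    then obtain y where y: "y \<in> halfspace F z1 w" "y \<in> halfspace F z2 w"
      by blast
    then have "pnorm2 y < 1"
      by (simp add: halfspace_def HF_def)
    then obtain p where "p \<in> HR_std F"
      and "\<And>z. z \<in> HR_std F \<Longrightarrow> hdist y z < hdist y w \<Longrightarrow> hdist p z < hdist p w"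
      using ex_real_point_preserving_closer \<open>w \<in> HR_std F\<close> by blast
    then have "p \<in> halfspace F z1 w \<inter> halfspace F z2 w \<inter> HR_std F"
      using y assms by (auto simp: halfspace_def HR_std_def)
    then show False
      using disjoint by blast
  qed
qed blast

lemma isometry_image_halfspace:
  assumes "isometry_HF F g" and "z \<in> HF F" and "w \<in> HF F"
  shows "g ` halfspace F z w = halfspace F (g z) (g w)"
proof -
  have "g ` HF F = HF F" and dist: "\<And>x y. x \<in> HF F \<Longrightarrow> y \<in> HF F \<Longrightarrow> hdist (g x) (g y) = hdist x y"
    using assms(1) by (auto simp: isometry_HF_def bij_betw_def)
  show ?thesis
  proof (intro equalityI subsetI)
    fix y
    assume "y \<in> g ` halfspace F z w"
    then obtain x where "x \<in> halfspace F z w" and "y = g x"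
      by blast
    then show "y \<in> halfspace F (g z) (g w)"
      using assms(2,3) \<open>g ` HF F = HF F\<close> by (auto simp: halfspace_def dist)
  next
    fix y
    assume "y \<in> halfspace F (g z) (g w)"
    then have "y \<in> g ` HF F"
      using \<open>g ` HF F = HF F\<close> by (simp add: halfspace_def)
    then obtain x where "x \<in> HF F" and "y = g x"
      by blast
    then have "x \<in> halfspace F z w"
      using \<open>y \<in> halfspace F (g z) (g w)\<close> assms(2,3) by (simp add: halfspace_def dist)
    then show "y \<in> g ` halfspace F z w"
      using \<open>y = g x\<close> by blast
  qed
qed

theorem theorem2p4:
  fixes F :: divalg and P :: "pt set" and w z1 z2 :: pt
  assumes "totally_real_plane F P"
    and "w \<in> P" and "z1 \<in> P" and "z2 \<in> P"
    and "z1 \<noteq> w" and "z2 \<noteq> w"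
  shows "halfspace F z1 w \<inter> halfspace F z2 w = {} \<longleftrightarrow>
         (halfspace F z1 w \<inter> P) \<inter> (halfspace F z2 w \<inter> P) = {}"
proof -
  obtain g where g: "isometry_HF F g" and P: "P = g ` HR_std F"
    using assms(1) by (auto simp: totally_real_plane_def)
  obtain w' z1' z2' where real: "w' \<in> HR_std F" "z1' \<in> HR_std F" "z2' \<in> HR_std F"
    and "w = g w'" "z1 = g z1'" "z2 = g z2'"
    using assms(2-4) P by blast
  have "HR_std F \<subseteq> HF F" "halfspace F z1' w' \<subseteq> HF F" "halfspace F z2' w' \<subseteq> HF F"
    by (auto simp: HR_std_def halfspace_def)
  moreover have "inj_on g (HF F)"
    using g by (simp add: isometry_HF_def bij_betw_def)
  moreover have "w' \<in> HF F" "z1' \<in> HF F" "z2' \<in> HF F"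
    using real \<open>HR_std F \<subseteq> HF F\<close> by auto
  then have "halfspace F z1 w = g ` halfspace F z1' w'" "halfspace F z2 w = g ` halfspace F z2' w'"
    by (simp_all add: isometry_image_halfspace[OF g] \<open>w = g w'\<close> \<open>z1 = g z1'\<close> \<open>z2 = g z2'\<close>)
  ultimately have "halfspace F z1 w \<inter> halfspace F z2 w = g ` (halfspace F z1' w' \<inter> halfspace F z2' w')"
    and "(halfspace F z1 w \<inter> P) \<inter> (halfspace F z2 w \<inter> P)
      = g ` (halfspace F z1' w' \<inter> halfspace F z2' w' \<inter> HR_std F)"
    unfolding P by (simp_all add: inj_on_image_Int Int_assoc Int_left_commute le_infI2)
  then show ?thesis
    using halfspaces_disjoint_iff_on_HR_std[OF real] by simp
qed

end
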